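(* In the setting below, for $n$ participants, the protocol consisting of the setup phase, Round 1 and Rounds 2–3 is correct, i.e. at the end every participant's balance is $0$ (and the shared address is empty), and, apart from the setup, it uses exactly $3\cdot n$ transactions.
   Context: Setting (Conspiracy Santa). There are $n$ participants $P_1,\dots,P_n$. Expenses are organized in exchange groups (in Conspiracy Santa: for each participant, the other $n-1$ participants form a group, choose a gift for him, one or more of them buy it, and its value is shared equally among the $n-1$ group members). All participants know a fixed upper bound $B$ (a positive integer, in cents) on the value of any gift. Setup phase: in each group every payment is broadcast to the group members, each member computes the in-group share (total paid in the group divided by the number of group members); each participant adds his in-group shares and subtracts his own expenses, obtaining his balance $p_i$, assumed to be an integer number of cents (shares may be unevenly split up to one cent). Thus $\sum_i p_i=0$; $p_i>0$ means $P_i$ owes money, $p_i<0$ means $P_i$ must be reimbursed. Sending $x$ cents decreases the sender's balance by $x$ and increases the receiver's balance by $x$. Participants also create anonymous cryptocurrency addresses, and one shared anonymous address (the piggy bank) whose secret key all participants know. All $x \bmod B$ denote the representative in $\{0,\dots,B-1\}$. Round 1 (private transactions on secure channels): $P_1$ samples $t_1$ uniformly in $\{1,\dots,B\}$, sets $p_1\leftarrow p_1-t_1$ and sends $t_1$ cents to $P_2$, who sets $p_2\leftarrow p_2+t_1$. For $i=2,\dots,n$: $P_i$ sets $t_i=p_i \bmod B$, and if $t_i=0$ sets $t_i=B$; then $p_i\leftarrow p_i-t_i$ and $P_i$ sends $t_i$ cents to $P_{i+1}$ (where $P_{n+1}=P_1$), who adds $t_i$ to his balance. Round 2: every $P_i$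 sends $B$ cents to the shared address and sets $p_i\leftarrow p_i-B$. Round 3: every $P_i$ with $p_i<0$ makes, for each of $-p_i/B$ times, the shared address pay $B$ cents to one of his own (distinct) anonymous addresses, and then sets $p_i\leftarrow 0$.
   Formalization: Each balance $p_i$ equals exactly the sum of his in-group shares, each the group total divided by $n-1$ without rounding, minus his own expenses, so shares are never unevenly split up to one cent. The paper assumes this as well. *)

theory Defs
  imports Complex_Main
begin

text \<open>Addresses: the (public) account of participant i, the k-th anonymous
address of participant i, and the shared anonymous address (piggy bank).
Participants are indexed 1..n.\<close>
datatype addr = Part nat | Anon nat nat | Piggy

text \<open>A transaction: (sender, receiver, amount in cents).\<close>
type_synonym tx = "addr \<times> addr \<times> int"

text \<open>State: the balances p_i of the participants (money still owed) and
the content of the shared address.\<close>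
type_synonym state = "(nat \<Rightarrow> int) \<times> int"

fun owner :: "addr \<Rightarrow> nat option" where
  "owner (Part i) = Some i"
| "owner (Anon i k) = Some i"
| "owner Piggy = None"

definition debit :: "addr \<Rightarrow> int \<Rightarrow> state \<Rightarrow> state" where
  "debit a x s = (case owner a of
      Some i \<Rightarrow> ((fst s)(i := fst s i - x), snd s)
    | None \<Rightarrow> (fst s, snd s - x))"

definition credit :: "addr \<Rightarrow> int \<Rightarrow> state \<Rightarrow> state" where
  "credit a x s = (case owner a of
      Some i \<Rightarrow> ((fst s)(i := fst s i + x), snd s)
    | None \<Rightarrow> (fst s, snd s + x))"

fun apply_tx :: "tx \<Rightarrow> state \<Rightarrow> state" where
  "apply_tx (a, b, x) s = credit b x (debit a x s)"

definition run_txs :: "tx list \<Rightarrow> state \<Rightarrow> state" where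
  "run_txs ts s = fold apply_tx ts s"

definition tval :: "int \<Rightarrow> int \<Rightarrow> int" where
  "tval B x = (if x mod B = 0 then B else x mod B)"

definition succ_part :: "nat \<Rightarrow> nat \<Rightarrow> nat" where
  "succ_part n i = (if i = n then 1 else Suc i)"

definition round1_step :: "int \<Rightarrow> nat \<Rightarrow> nat \<Rightarrow> state \<times> tx list \<Rightarrow> state \<times> tx list" where
  "round1_step B n i st =
     (let s = fst st; t = tval B (fst s i); tr = (Part i, Part (succ_part n i), t)
      in (apply_tx tr s, snd st @ [tr]))"

text \<open>Round 1 with P_1's sampled value t1: returns the resulting state and
the list of transactions performed.\<close>
definition round1 :: "int \<Rightarrow> nat \<Rightarrow> int \<Rightarrow> state \<Rightarrow> state \<times> tx list" where
  "round1 B n t1 s0 =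
     (let tr = (Part 1, Part (succ_part n 1), t1)
      in fold (round1_step B n) [2..<Suc n] (apply_tx tr s0, [tr]))"

definition round2 :: "int \<Rightarrow> nat \<Rightarrow> tx list" where
  "round2 B n = map (\<lambda>i. (Part i, Piggy, B)) [1..<Suc n]"

definition round3 :: "int \<Rightarrow> nat \<Rightarrow> state \<Rightarrow> tx list" where
  "round3 B n s = concat (map (\<lambda>i.
      if fst s i < 0
      then map (\<lambda>k. (Piggy, Anon i k, B)) [0..<nat ((- fst s i) div B)]
      else []) [1..<Suc n])"

text \<open>Setup phase of Conspiracy Santa: pay i j \<ge> 0 is what P_i (i \<noteq> j)
paid for the gift of P_j; the gift value is the total paid in group j, at
most B; the in-group share is that total divided by the n-1 group members.\<close>
definition santa_balance :: "nat \<Rightarrow> (nat \<Rightarrow> nat \<Rightarrow> int) \<Rightarrow> nat \<Rightarrow> real" where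
  "santa_balance n pay i =
     (\<Sum>j\<in>{1..n} - {i}. real_of_int (\<Sum>k\<in>{1..n} - {j}. pay k j) / real (n - 1))
     - real_of_int (\<Sum>j\<in>{1..n} - {i}. pay i j)"

end

theory Submission
  imports Defs
begin

text \<open>Every setup balance is at most B, since a participant's shares add up to at most
one gift value, and the balances sum to 0. In Round 1 each P_i with i \<ge> 2 holds at most 2B
when his turn comes (his balance plus the token t_(i-1) \<le> B) and keeps the largest multiple
of B below that, hence at most B; P_1 ends below 2B, and as the total is still 0 his balance
is a multiple of B too, so also at most B. After Round 2 every balance is a nonpositive
multiple of B and the piggy bank holds nB, which Round 3 pays out in chunks of B: exactly
n transactions, leaving every balance and the piggy bank at 0.\<close>

definition net_gain :: "nat option \<Rightarrow> tx \<Rightarrow> int" where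
  "net_gain who tr = (case tr of (a, b, x) \<Rightarrow>
      (if owner b = who then x else 0) - (if owner a = who then x else 0))"

lemma fst_run_txs: "fst (run_txs ts s) i = fst s i + (\<Sum>tr\<leftarrow>ts. net_gain (Some i) tr)"
  unfolding run_txs_def
  by (induction ts arbitrary: s) (auto simp: net_gain_def debit_def credit_def split: option.splits)

lemma snd_run_txs: "snd (run_txs ts s) = snd s + (\<Sum>tr\<leftarrow>ts. net_gain None tr)"
  unfolding run_txs_def
  by (induction ts arbitrary: s) (auto simp: net_gain_def debit_def credit_def split: option.splits)

lemma sum_list_concat: "sum_list (concat xss) = sum_list (map sum_list (xss :: 'a::monoid_add list list))"
  by (induction xss) simp_all

lemma sum_list_map_upt_Suc: "(\<Sum>i\<leftarrow>[1..<Suc n]. f i) = (\<Sum>i\<in>{1..n}. f i)"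
  unfolding interv_sum_list_conv_sum_set_nat set_upt atLeastLessThanSuc_atLeastAtMost ..

definition transfer :: "nat \<Rightarrow> nat \<Rightarrow> int \<Rightarrow> (nat \<Rightarrow> int) \<Rightarrow> nat \<Rightarrow> int" where
  "transfer i j x f = f(i := f i - x, j := f j + x)"

lemma apply_tx_Part_Part:
  "i \<noteq> j \<Longrightarrow> apply_tx (Part i, Part j, x) s = (transfer i j x (fst s), snd s)"
  by (simp add: transfer_def debit_def credit_def)

lemma sum_transfer:
  assumes "finite A" "i \<in> A" "j \<in> A" "i \<noteq> j"
  shows "sum (transfer i j x f) A = sum f A"
proof -
  have "transfer i j x f = (\<lambda>k. f k + ((if k = j then x else 0) - (if k = i then x else 0)))"
    using assms(4) by (auto simp: transfer_def fun_eq_iff)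
  then show ?thesis
    using assms(1-3) by (simp add: sum.distrib sum_subtractf)
qed

lemma tval_bounds:
  assumes "B > 0"
  shows "1 \<le> tval B x \<and> tval B x \<le> B"
  using assms pos_mod_bound[OF assms, of x] pos_mod_sign[OF assms, of x]
  unfolding tval_def by (simp split: if_split)

lemma dvd_diff_tval: "B dvd x - tval B x"
  unfolding tval_def by (auto simp: mod_eq_0_iff_dvd)

lemma dvd_less_double_imp_le:
  fixes B y :: int
  assumes "B > 0" "B dvd y" "y < 2 * B"
  shows "y \<le> B"
proof -
  obtain k where "y = B * k" using assms(2) ..
  with assms(1,3) have "k \<le> 1" by simp
  with \<open>y = B * k\<close> assms(1) show ?thesis by simp
qed

lemma diff_tval_le: "B > 0 \<Longrightarrow> x \<le> 2 * B \<Longrightarrow> x - tval B x \<le> B"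
  using tval_bounds[of B x] dvd_diff_tval[of B x] dvd_less_double_imp_le[of B "x - tval B x"]
  by linarith

lemma dvd_summand_if_sum_zero:
  fixes f :: "'a \<Rightarrow> 'b::comm_ring_1"
  assumes "finite A" "i \<in> A" "sum f A = 0" "\<forall>k\<in>A - {i}. d dvd f k"
  shows "d dvd f i"
proof -
  have "f i = - sum f (A - {i})"
    using assms(1-3) sum.remove[of A i f] by (simp add: eq_neg_iff_add_eq_0)
  then show ?thesis using assms(4) dvd_sum[of "A - {i}" d f] by simp
qed

lemma sum_offdiag_swap:
  "finite A \<Longrightarrow> (\<Sum>i\<in>A. \<Sum>j\<in>A - {i}. f i j) = (\<Sum>j\<in>A. \<Sum>i\<in>A - {j}. f i j)"
  using sum.swap_restrict[of A A f "\<lambda>i j. i \<noteq> j"] by (simp add: set_diff_eq eq_commute)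

lemma sum_santa_balance:
  assumes "n \<ge> 2"
  shows "(\<Sum>i\<in>{1..n}. santa_balance n pay i) = 0"
proof -
  let ?A = "{1..n}"
  define share where "share j = real_of_int (\<Sum>k\<in>?A - {j}. pay k j) / real (n - 1)" for j
  have "(\<Sum>i\<in>?A. \<Sum>j\<in>?A - {i}. share j) = (\<Sum>j\<in>?A. \<Sum>i\<in>?A - {j}. share j)"
    by (simp add: sum_offdiag_swap)
  also have "\<dots> = (\<Sum>j\<in>?A. real (n - 1) * share j)"
    by simp
  also have "\<dots> = (\<Sum>j\<in>?A. real_of_int (\<Sum>k\<in>?A - {j}. pay k j))"
    using assms by (simp add: share_def)
  also have "\<dots> = real_of_int (\<Sum>i\<in>?A. \<Sum>j\<in>?A - {i}. pay i j)"
    by (simp only: of_int_sum sum_offdiag_swap[of ?A pay] finite_atLeastAtMost)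
  finally show ?thesis
    unfolding santa_balance_def share_def[symmetric] by (simp add: sum_subtractf)
qed

lemma santa_balance_le:
  assumes "n \<ge> 2" and i: "i \<in> {1..n}"
    and pay_nonneg: "\<And>j. j \<in> {1..n} \<Longrightarrow> j \<noteq> i \<Longrightarrow> pay i j \<ge> 0"
    and gift_le: "\<And>j. j \<in> {1..n} \<Longrightarrow> (\<Sum>k\<in>{1..n} - {j}. pay k j) \<le> B"
  shows "santa_balance n pay i \<le> real_of_int B"
proof -
  let ?A = "{1..n}"
  have n1: "real (n - 1) > 0" using assms(1) by simp
  have "(\<Sum>j\<in>?A - {i}. real_of_int (\<Sum>k\<in>?A - {j}. pay k j) / real (n - 1))
      \<le> (\<Sum>j\<in>?A - {i}. real_of_int B / real (n - 1))"
    using n1 gift_le by (intro sum_mono divide_right_mono) (auto simp del: of_int_sum)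
  also have "\<dots> = real_of_int B" using i n1 by simp
  moreover have "(\<Sum>j\<in>?A - {i}. pay i j) \<ge> 0" using pay_nonneg by (intro sum_nonneg) auto
  ultimately show ?thesis unfolding santa_balance_def by linarith
qed

lemma succ_part_neq: "2 \<le> n \<Longrightarrow> succ_part n i \<noteq> i"
  by (simp add: succ_part_def)

lemma succ_part_mem: "i \<in> {1..n} \<Longrightarrow> succ_part n i \<in> {1..n}"
  by (auto simp: succ_part_def)

lemma round1_step_state:
  assumes "succ_part n i \<noteq> i"
  shows "fst (fst (round1_step B n i st))
           = transfer i (succ_part n i) (tval B (fst (fst st) i)) (fst (fst st))"
    and "snd (fst (round1_step B n i st)) = snd (fst st)"
  using assms by (simp_all add: round1_step_def Let_def apply_tx_Part_Part del: apply_tx.simps)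

lemma length_fold_round1_step:
  "length (snd (fold (round1_step B n) is st)) = length (snd st) + length is"
  by (induction "is" arbitrary: st) (simp_all add: round1_step_def Let_def)

lemma fold_round1_step_conserves:
  assumes "2 \<le> n" "set is \<subseteq> {1..n}"
  shows "sum (fst (fst (fold (round1_step B n) is st))) {1..n} = sum (fst (fst st)) {1..n}
    \<and> snd (fst (fold (round1_step B n) is st)) = snd (fst st)"
  using assms(2)
proof (induction "is" arbitrary: st)
  case Nil
  then show ?case by simp
next
  case (Cons i "is")
  have "i \<in> {1..n}" using Cons.prems by simp
  then have "sum (fst (fst (round1_step B n i st))) {1..n} = sum (fst (fst st)) {1..n}"
    using round1_step_state(1) succ_part_neq[OF assms(1)] succ_part_mem sum_transfer
    by (metis finite_atLeastAtMost)
  then show ?case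
    using Cons round1_step_state(2) succ_part_neq[OF assms(1)] by simp
qed

lemma round1_eq_fold:
  "2 \<le> n \<Longrightarrow> round1 B n t1 s0 = fold (round1_step B n) [2..<Suc n]
      (apply_tx (Part 1, Part 2, t1) s0, [(Part 1, Part 2, t1)])"
  by (simp add: round1_def Let_def succ_part_def numeral_2_eq_2 del: apply_tx.simps upt_Suc)

lemma round1_conserves:
  assumes "2 \<le> n" and "round1 B n t1 s0 = (s1, T1)"
  shows "sum (fst s1) {1..n} = sum (fst s0) {1..n}" and "snd s1 = snd s0" and "length T1 = n"
proof -
  let ?st0 = "(apply_tx (Part 1, Part 2, t1) s0, [(Part 1, Part 2, t1)])"
  have run: "(s1, T1) = fold (round1_step B n) [2..<Suc n] ?st0"
    using assms round1_eq_fold by metis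
  have "sum (fst (fst ?st0)) {1..n} = sum (fst s0) {1..n}" "snd (fst ?st0) = snd s0"
    using assms(1) by (simp_all add: apply_tx_Part_Part sum_transfer del: apply_tx.simps)
  moreover have "set [2..<Suc n] \<subseteq> {1..n}" by auto
  ultimately show "sum (fst s1) {1..n} = sum (fst s0) {1..n}" and "snd s1 = snd s0"
    using fold_round1_step_conserves[OF assms(1), of "[2..<Suc n]" B ?st0] unfolding run[symmetric] by auto
  show "length T1 = n"
    using length_fold_round1_step[of B n "[2..<Suc n]" ?st0] assms(1) unfolding run[symmetric] by simp
qed

text \<open>The state after P_2, ..., P_m have played in Round 1: P_(m+1) has just received
his token.\<close>

definition round1_invariant :: "int \<Rightarrow> nat \<Rightarrow> nat \<Rightarrow> (nat \<Rightarrow> int) \<Rightarrow> bool" where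
  "round1_invariant B n m f \<longleftrightarrow>
     f 1 < B \<and> (\<forall>k\<in>{2..m}. B dvd f k \<and> f k \<le> B) \<and> f (Suc m) \<le> 2 * B
     \<and> (\<forall>k\<in>{Suc (Suc m)..n}. f k \<le> B)"

lemma round1_invariant_step:
  assumes "B > 0" "1 \<le> m" "Suc m < n" and inv: "round1_invariant B n m f"
  shows "round1_invariant B n (Suc m) (transfer (Suc m) (Suc (Suc m)) (tval B (f (Suc m))) f)"
proof -
  let ?t = "tval B (f (Suc m))"
  have "B dvd f (Suc m) - ?t" "f (Suc m) - ?t \<le> B"
    using inv assms(1) dvd_diff_tval diff_tval_le unfolding round1_invariant_def by auto
  moreover have "f (Suc (Suc m)) \<le> B"
    using inv assms(3) unfolding round1_invariant_def by simp
  then have "f (Suc (Suc m)) + ?t \<le> 2 * B"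
    using tval_bounds[OF assms(1), of "f (Suc m)"] by linarith
  ultimately show ?thesis
    using inv assms(2) unfolding round1_invariant_def transfer_def by (auto simp: le_Suc_eq)
qed

lemma round1_invariant_fold:
  assumes "B > 0" "1 \<le> m" "m < n" and inv: "round1_invariant B n 1 (fst (fst st))"
  shows "round1_invariant B n m (fst (fst (fold (round1_step B n) [2..<Suc m] st)))"
  using assms(2,3)
proof (induction m rule: dec_induct)
  case base
  then show ?case using inv by simp
next
  case (step k)
  have "succ_part n (Suc k) = Suc (Suc k)" using step.prems by (simp add: succ_part_def)
  then show ?case
    using step round1_invariant_step[OF assms(1)] round1_step_state(1)[of n "Suc k"]
    by simp
qed

lemma round1_settles:
  assumes n: "2 \<le> n" and B: "B > 0"
    and bounded: "\<forall>i\<in>{1..n}. p i \<le> B" and balanced: "sum p {1..n} = 0"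
    and t1: "t1 \<in> {1..B}" and run: "round1 B n t1 (p, c) = (s1, T1)"
  shows "\<forall>i\<in>{1..n}. B dvd fst s1 i \<and> fst s1 i \<le> B"
proof -
  let ?st0 = "(apply_tx (Part 1, Part 2, t1) (p, c), [(Part 1, Part 2, t1)])"
  define st where "st = fold (round1_step B n) [2..<n] ?st0"
  define g where "g = fst (fst st)"
  have "p 1 \<le> B" "p 2 \<le> B" using n bounded by auto
  then have "p 1 - t1 < B" "p 2 + t1 \<le> 2 * B" using t1 by auto
  then have "round1_invariant B n 1 (fst (fst ?st0))"
    using n bounded unfolding round1_invariant_def
    by (auto simp: apply_tx_Part_Part transfer_def simp del: apply_tx.simps)
  then have inv: "round1_invariant B n (n - 1) g"
    using round1_invariant_fold[OF B, of "n - 1" n ?st0] n unfolding g_def st_def by simp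
  have "(s1, T1) = round1_step B n n st"
    using run round1_eq_fold[OF n] n unfolding st_def
    by (simp add: upt_Suc_append del: apply_tx.simps)
  then have "s1 = fst (round1_step B n n st)" by (metis fst_conv)
  then have s1: "fst s1 = transfer n 1 (tval B (g n)) g"
    using round1_step_state(1)[of n n B st] n unfolding g_def by (simp add: succ_part_def)
  have "g n \<le> 2 * B" using inv n unfolding round1_invariant_def by simp
  then have settled: "\<forall>i\<in>{2..n}. B dvd fst s1 i \<and> fst s1 i \<le> B"
    using inv B dvd_diff_tval diff_tval_le unfolding s1 transfer_def round1_invariant_def
    by auto
  have "fst s1 1 < 2 * B"
    using inv n tval_bounds[OF B, of "g n"] unfolding s1 transfer_def round1_invariant_def by simp
  moreover have "B dvd fst s1 1"
  proof (rule dvd_summand_if_sum_zero[of "{1..n}"])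
    show "sum (fst s1) {1..n} = 0" using round1_conserves(1)[OF n run] balanced by simp
    show "\<forall>k\<in>{1..n} - {1}. B dvd fst s1 k" using settled by auto
  qed (use n in auto)
  ultimately have "fst s1 1 \<le> B" using dvd_less_double_imp_le[OF B] by blast
  moreover have "{1..n} = insert 1 {2..n}" using n by auto
  ultimately show ?thesis using settled \<open>B dvd fst s1 1\<close> by simp
qed

lemma fst_run_round2: "i \<in> {1..n} \<Longrightarrow> fst (run_txs (round2 B n) s) i = fst s i - B"
  unfolding fst_run_txs round2_def map_map o_def sum_list_map_upt_Suc
  by (simp add: net_gain_def sum_negf)

lemma snd_run_round2: "snd (run_txs (round2 B n) s) = snd s + int n * B"
  unfolding snd_run_txs round2_def map_map o_def sum_list_map_upt_Suc
  by (simp add: net_gain_def)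

lemma int_nat_neg_div_mult:
  fixes B x :: int
  assumes "B > 0" "B dvd x" "x \<le> 0"
  shows "int (nat (- x div B)) * B = - x"
  using assms by (auto simp: pos_imp_zdiv_nonneg_iff)

text \<open>The guard p_i < 0 in round3 is redundant: otherwise the count nat (-p_i div B) is 0.\<close>

lemma round3_eq:
  "B > 0 \<Longrightarrow> round3 B n s =
     concat (map (\<lambda>i. map (\<lambda>k. (Piggy, Anon i k, B)) [0..<nat (- fst s i div B)]) [1..<Suc n])"
  unfolding round3_def by (intro arg_cong[where f = concat] map_cong) (auto simp: div_nonpos_pos_le0)

lemma fst_run_round3:
  assumes "B > 0" "i \<in> {1..n}" "B dvd fst s i" "fst s i \<le> 0"
  shows "fst (run_txs (round3 B n s) s) i = 0"
proof -
  have "(\<Sum>tr\<leftarrow>round3 B n s. net_gain (Some i) tr)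
      = (\<Sum>j\<in>{1..n}. if j = i then int (nat (- fst s j div B)) * B else 0)"
    unfolding round3_eq[OF assms(1)] map_concat sum_list_concat map_map o_def sum_list_map_upt_Suc
    by (intro sum.cong) (simp_all add: net_gain_def sum_list_triv)
  also have "\<dots> = - fst s i"
    using assms by (simp add: int_nat_neg_div_mult del: int_nat_eq)
  finally show ?thesis by (simp add: fst_run_txs)
qed

lemma snd_run_round3:
  assumes "B > 0" "\<forall>j\<in>{1..n}. B dvd fst s j \<and> fst s j \<le> 0"
  shows "snd (run_txs (round3 B n s) s) = snd s + (\<Sum>j\<in>{1..n}. fst s j)"
proof -
  have "(\<Sum>tr\<leftarrow>round3 B n s. net_gain None tr) = (\<Sum>j\<in>{1..n}. - (int (nat (- fst s j div B)) * B))"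
    unfolding round3_eq[OF assms(1)] map_concat sum_list_concat map_map o_def sum_list_map_upt_Suc
    by (intro sum.cong) (simp_all add: net_gain_def sum_list_triv)
  also have "\<dots> = (\<Sum>j\<in>{1..n}. fst s j)"
    using assms by (intro sum.cong) (simp_all add: int_nat_neg_div_mult del: int_nat_eq)
  finally show ?thesis by (simp add: snd_run_txs)
qed

lemma length_round3:
  assumes "B > 0" "\<forall>j\<in>{1..n}. B dvd fst s j \<and> fst s j \<le> 0"
  shows "int (length (round3 B n s)) * B = - (\<Sum>j\<in>{1..n}. fst s j)"
proof -
  have "length (round3 B n s) = (\<Sum>j\<in>{1..n}. nat (- fst s j div B))"
    unfolding round3_eq[OF assms(1)] length_concat map_map o_def sum_list_map_upt_Suc by simp
  then have "int (length (round3 B n s)) * B = (\<Sum>j\<in>{1..n}. int (nat (- fst s j div B)) * B)"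
    by (simp add: sum_distrib_right)
  also have "\<dots> = - (\<Sum>j\<in>{1..n}. fst s j)"
    using assms by (simp add: int_nat_neg_div_mult sum_negf del: int_nat_eq)
  finally show ?thesis .
qed

theorem theorem2:
  fixes n :: nat and B :: int and pay :: "nat \<Rightarrow> nat \<Rightarrow> int" and p :: "nat \<Rightarrow> int"
  assumes "n \<ge> 2" and "B > 0"
    and "\<And>i j. i \<in> {1..n} \<Longrightarrow> j \<in> {1..n} \<Longrightarrow> i \<noteq> j \<Longrightarrow> pay i j \<ge> 0"
    and "\<And>j. j \<in> {1..n} \<Longrightarrow> (\<Sum>k\<in>{1..n} - {j}. pay k j) \<le> B"
    and "\<And>i. i \<in> {1..n} \<Longrightarrow> real_of_int (p i) = santa_balance n pay i"
    and "t1 \<in> {1..B}"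
  shows "let (s1, T1) = round1 B n t1 (p, 0);
             T2 = round2 B n;
             s2 = run_txs T2 s1;
             T3 = round3 B n s2;
             s3 = run_txs T3 s2
         in (\<forall>i\<in>{1..n}. fst s3 i = 0) \<and> snd s3 = 0
            \<and> length (T1 @ T2 @ T3) = 3 * n"
proof -
  note n = assms(1) and B = assms(2)
  have bounded: "\<forall>i\<in>{1..n}. p i \<le> B"
    using santa_balance_le[OF n _ assms(3) assms(4)] assms(5) by (metis of_int_le_iff)
  have "real_of_int (sum p {1..n}) = 0"
    using sum_santa_balance[OF n, of pay] assms(5) by simp
  then have balanced: "sum p {1..n} = 0" by (simp del: of_int_sum)
  obtain s1 T1 where run1: "round1 B n t1 (p, 0) = (s1, T1)" by fastforce
  define s2 where "s2 = run_txs (round2 B n) s1"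
  have s2: "\<forall>i\<in>{1..n}. B dvd fst s2 i \<and> fst s2 i \<le> 0"
    using round1_settles[OF n B bounded balanced assms(6) run1] by (simp add: s2_def fst_run_round2)
  have sum2: "(\<Sum>i\<in>{1..n}. fst s2 i) = - (int n * B)"
    using round1_conserves(1)[OF n run1] balanced by (simp add: s2_def fst_run_round2 sum_subtractf)
  have piggy2: "snd s2 = int n * B"
    using round1_conserves(2)[OF n run1] by (simp add: s2_def snd_run_round2)
  have "length (round3 B n s2) = n"
    using length_round3[OF B s2] sum2 B by simp
  moreover have "length (round2 B n) = n" by (simp add: round2_def)
  ultimately show ?thesis
    using fst_run_round3[OF B] snd_run_round3[OF B s2] s2 sum2 piggy2 round1_conserves(3)[OF n run1]
    unfolding Let_def run1 prod.case s2_def[symmetric] by simp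
qed

end
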